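(* For every integer $s\ge4$, $F_{s,5}(x)=\frac{1}{(s-1)!}\bigl(x^2-(12s-5)x+12s^2\bigr)(x-2s)\prod_{p=5}^{s}(x-p)$ (an empty product equals $1$).
   Context: For an integer $j\ge0$, $\binom{x}{j}=x(x-1)\cdots(x-j+1)/j!$ as a polynomial in $x$, and $\binom{x}{j}=0$ for $j<0$. For integers $s\ge1$, $k\ge1$, the Moser polynomial is $F_{s,k}(x)=\sum_{p=1}^{s}(-1)^{p-1}p^{k-1}\binom{x}{s-p}$. *)

theory Defs
  imports "HOL-Computational_Algebra.Polynomial"
begin

definition binom_poly :: "int \<Rightarrow> rat poly" where
  "binom_poly j = (if j < 0 then 0
     else smult (1 / fact (nat j)) (\<Prod>i<nat j. [:- of_nat i, 1:]))"

definition moser_poly :: "nat \<Rightarrow> nat \<Rightarrow> rat poly" where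
  "moser_poly s k = (\<Sum>p=1..s. smult ((-1) ^ (p - 1) * of_nat p ^ (k - 1))
                                     (binom_poly (int s - int p)))"

end

theory Submission
  imports Defs
begin

(* Both F_{s,5} and the claimed closed form R_s satisfy G_{s+1}(x+1) = G_{s+1}(x) + G_s(x)
   (for F this is Pascal's rule), both take the value (-1)^(s-1) s^4 at x = 0, and they
   coincide for s = 4. Hence they agree at every natural number x for every s >= 4, and
   polynomials agreeing at infinitely many points are equal. *)

lemma poly_eqI_of_nat:
  fixes p q :: "'a::{idom,ring_char_0} poly"
  assumes "\<And>n. poly p (of_nat n) = poly q (of_nat n)"
  shows "p = q"
proof (rule ccontr)
  assume "p \<noteq> q"
  then have "finite {x. poly (p - q) x = 0}"
    by (intro poly_roots_finite) simp
  moreover have "range (of_nat :: nat \<Rightarrow> 'a) \<subseteq> {x. poly (p - q) x = 0}"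
    using assms by auto
  ultimately have "finite (range (of_nat :: nat \<Rightarrow> 'a))"
    by (rule finite_subset[rotated])
  moreover have "infinite (range (of_nat :: nat \<Rightarrow> 'a))"
    by (intro range_inj_infinite) (simp add: inj_on_def)
  ultimately show False
    by contradiction
qed

lemma pascal_table_eqI:
  fixes f g :: "nat \<Rightarrow> nat \<Rightarrow> 'a::plus"
  assumes first_row: "\<And>x. f m x = g m x"
    and first_column: "\<And>n. n \<ge> m \<Longrightarrow> f (Suc n) 0 = g (Suc n) 0"
    and f_rec: "\<And>n x. n \<ge> m \<Longrightarrow> f (Suc n) (Suc x) = f (Suc n) x + f n x"
    and g_rec: "\<And>n x. n \<ge> m \<Longrightarrow> g (Suc n) (Suc x) = g (Suc n) x + g n x"
    and "n \<ge> m"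
  shows "f n x = g n x"
  using \<open>n \<ge> m\<close>
proof (induction n arbitrary: x rule: dec_induct)
  case base
  then show ?case by (rule first_row)
next
  case (step n)
  then show ?case
    by (induction x) (simp_all add: first_column f_rec g_rec)
qed

lemma poly_binom_poly: "j \<ge> 0 \<Longrightarrow> poly (binom_poly j) x = x gchoose nat j"
  by (simp add: binom_poly_def gbinomial_prod_rev poly_prod atLeast0LessThan)

lemma poly_moser_poly:
  "poly (moser_poly s k) x = (\<Sum>p=1..s. (-1) ^ (p - 1) * of_nat p ^ (k - 1) * (x gchoose (s - p)))"
  unfolding moser_poly_def poly_sum
  by (intro sum.cong refl) (auto simp: poly_binom_poly nat_diff_distrib)

lemma poly_moser_poly_Suc_shift:
  "poly (moser_poly (Suc s) k) (x + 1) = poly (moser_poly (Suc s) k) x + poly (moser_poly s k) x"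
proof -
  let ?c = "\<lambda>p. (-1) ^ (p - 1) * of_nat p ^ (k - 1) :: rat"
  have split_last: "poly (moser_poly (Suc s) k) y =
      (\<Sum>p=1..s. ?c p * (y gchoose Suc (s - p))) + ?c (Suc s)" for y
    by (simp add: poly_moser_poly Suc_diff_le)
  have "(\<Sum>p=1..s. ?c p * ((x + 1) gchoose Suc (s - p)))
      = (\<Sum>p=1..s. ?c p * (x gchoose Suc (s - p))) + poly (moser_poly s k) x"
    unfolding poly_moser_poly sum.distrib[symmetric]
    by (intro sum.cong refl) (simp only: gbinomial_Suc_Suc distrib_left)
  then show ?thesis
    by (simp add: split_last)
qed

lemma poly_moser_poly_at_0:
  assumes "s \<ge> 1"
  shows "poly (moser_poly s k) 0 = (-1) ^ (s - 1) * of_nat s ^ (k - 1)"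
proof -
  have "poly (moser_poly s k) 0 =
      (\<Sum>p\<in>{s}. (-1) ^ (p - 1) * of_nat p ^ (k - 1) * ((0::rat) gchoose (s - p)))"
    unfolding poly_moser_poly using assms
    by (intro sum.mono_neutral_right) (auto simp: gbinomial_0_left)
  then show ?thesis by simp
qed

lemma prod_shift_linear_factors:
  fixes x :: "'a::comm_ring_1"
  assumes "a \<le> n"
  shows "(\<Prod>p\<in>{Suc a..Suc n}. x + 1 - of_nat p) = (x - of_nat a) * (\<Prod>p\<in>{Suc a..n}. x - of_nat p)"
proof -
  have "(\<Prod>p\<in>{Suc a..Suc n}. x + 1 - of_nat p) = (\<Prod>p\<in>{a..n}. x - of_nat p)"
    unfolding prod.shift_bounds_cl_Suc_ivl by simp
  also have "\<dots> = (x - of_nat a) * (\<Prod>p\<in>{Suc a..n}. x - of_nat p)"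
    using assms by (simp add: prod.atLeast_Suc_atMost)
  finally show ?thesis .
qed

lemma prod_negated_atLeastAtMost:
  assumes "a \<le> n"
  shows "(\<Prod>p\<in>{Suc a..n}. - of_nat p) = (-1) ^ (n - a) * fact n / (fact a :: 'a::field_char_0)"
proof -
  have "(fact n :: 'a) = of_nat (fact a * \<Prod>{Suc a..n})"
    by (simp only: of_nat_fact fact_eq_fact_times[OF assms, symmetric])
  also have "\<dots> = fact a * (\<Prod>p\<in>{Suc a..n}. of_nat p)"
    by (simp add: of_nat_prod)
  finally have "(fact n :: 'a) = fact a * (\<Prod>p\<in>{Suc a..n}. of_nat p)" .
  then show ?thesis
    by (simp add: prod_uminus)
qed

definition moser5_closed_form :: "nat \<Rightarrow> 'a::field_char_0 \<Rightarrow> 'a" where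
  "moser5_closed_form s x = (x\<^sup>2 - (12 * of_nat s - 5) * x + 12 * of_nat s ^ 2) * (x - 2 * of_nat s)
     * (\<Prod>p\<in>{5..s}. x - of_nat p) / fact (s - 1)"

lemma poly_moser5_closed_form:
  "poly (smult (1 / fact (s - 1))
      ([: 12 * of_nat s ^ 2, - (12 * of_nat s - 5), 1 :]
       * [: - (2 * of_nat s), 1 :]
       * (\<Prod>p\<in>{5..s}. [: - of_nat p, 1 :]))) x = moser5_closed_form s x"
  by (simp add: moser5_closed_form_def poly_prod field_simps power2_eq_square)

lemma moser5_closed_form_Suc_shift:
  fixes x :: "'a::field_char_0"
  assumes "n \<ge> 4"
  shows "moser5_closed_form (Suc n) (x + 1) = moser5_closed_form (Suc n) x + moser5_closed_form n x"
proof -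
  define q where "q m y = y\<^sup>2 - (12 * of_nat m - 5) * y + 12 * of_nat m ^ 2" for m and y :: 'a
  define P where "P = (\<Prod>p\<in>{5..n}. x - of_nat p)"
  \<comment> \<open>the recurrence after cancelling the common factor \<open>P / fact n\<close>\<close>
  have key: "q (Suc n) (x + 1) * (x - 2 * of_nat n - 1) * (x - 4)
      = q (Suc n) x * (x - 2 * of_nat n - 2) * (x - of_nat n - 1) + of_nat n * q n x * (x - 2 * of_nat n)"
    by (simp add: q_def algebra_simps power2_eq_square)
  have shifted: "(\<Prod>p\<in>{5..Suc n}. x + 1 - of_nat p) = (x - 4) * P"
    using prod_shift_linear_factors[of 4 n x] assms by (simp add: P_def numeral_eq_Suc)
  have unshifted: "(\<Prod>p\<in>{5..Suc n}. x - of_nat p) = P * (x - of_nat n - 1)"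
    using assms by (simp add: P_def prod.cl_ivl_Suc algebra_simps)
  have fact_pred: "(fact (n - 1) :: 'a) = fact n / of_nat n"
    using assms by (simp add: fact_reduce)
  have "moser5_closed_form (Suc n) (x + 1)
      = q (Suc n) (x + 1) * (x - 2 * of_nat n - 1) * (x - 4) * P / fact n"
    unfolding moser5_closed_form_def shifted by (simp add: q_def algebra_simps)
  also have "\<dots> = (q (Suc n) x * (x - 2 * of_nat n - 2) * (x - of_nat n - 1)
      + of_nat n * q n x * (x - 2 * of_nat n)) * P / fact n"
    by (simp only: key)
  also have "\<dots> = moser5_closed_form (Suc n) x + moser5_closed_form n x"
    unfolding moser5_closed_form_def unshifted fact_pred
    using assms by (simp add: q_def P_def field_simps)
  finally show ?thesis .
qed

lemma moser5_closed_form_at_0: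
  assumes "s \<ge> 4"
  shows "moser5_closed_form s 0 = (-1) ^ (s - 1) * (of_nat s ^ 4 :: 'a::field_char_0)"
proof -
  obtain k where s: "s = k + 4"
    using assms by (metis add.commute le_Suc_ex)
  have prod_at_0: "(\<Prod>p\<in>{5..s}. 0 - of_nat p) = (-1) ^ k * fact s / (24 :: 'a)"
    using prod_negated_atLeastAtMost[of 4 s] by (simp add: s fact_numeral numeral_eq_Suc)
  have fact_pred: "(fact (s - 1) :: 'a) = fact s / of_nat s"
    using assms by (simp add: fact_reduce)
  have sign: "(-1 :: 'a) ^ (s - 1) = - ((-1) ^ k)"
    by (simp add: s power_add)
  have "(of_nat s :: 'a) \<noteq> 0"
    using assms by simp
  then show ?thesis
    unfolding moser5_closed_form_def prod_at_0 fact_pred sign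
    by (simp add: field_simps power2_eq_square power4_eq_xxxx)
qed

lemma poly_moser_poly_4_5: "poly (moser_poly 4 5) x = moser5_closed_form 4 x"
  by (simp add: poly_moser_poly moser5_closed_form_def gbinomial_prod_rev numeral_eq_Suc
      atLeast0LessThan fact_numeral field_simps power2_eq_square)

lemma poly_moser_poly_5_of_nat:
  assumes "s \<ge> 4"
  shows "poly (moser_poly s 5) (of_nat x) = moser5_closed_form s (of_nat x)"
proof (rule pascal_table_eqI[where f = "\<lambda>n x. poly (moser_poly n 5) (of_nat x)"
      and g = "\<lambda>n x. moser5_closed_form n (of_nat x)" and m = 4, OF _ _ _ _ assms])
  show "poly (moser_poly 4 5) (of_nat y) = moser5_closed_form 4 (of_nat y)" for y
    by (rule poly_moser_poly_4_5)
  show "poly (moser_poly (Suc n) 5) (of_nat 0) = moser5_closed_form (Suc n) (of_nat 0)"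
    if "n \<ge> 4" for n
    using that by (simp add: poly_moser_poly_at_0 moser5_closed_form_at_0)
  show "poly (moser_poly (Suc n) 5) (of_nat (Suc y))
      = poly (moser_poly (Suc n) 5) (of_nat y) + poly (moser_poly n 5) (of_nat y)" for n y
    using poly_moser_poly_Suc_shift[of n 5 "of_nat y"] by (simp add: add.commute)
  show "moser5_closed_form (Suc n) (of_nat (Suc y) :: rat)
      = moser5_closed_form (Suc n) (of_nat y) + moser5_closed_form n (of_nat y)"
    if "n \<ge> 4" for n y
    using moser5_closed_form_Suc_shift[OF that, of "of_nat y"] by (simp add: add.commute)
qed

theorem mainTheorem8:
  fixes s :: nat
  assumes "s \<ge> 4"
  shows "moser_poly s 5 =
    smult (1 / fact (s - 1))
      ([: 12 * of_nat s ^ 2, - (12 * of_nat s - 5), 1 :]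
       * [: - (2 * of_nat s), 1 :]
       * (\<Prod>p\<in>{5..s}. [: - of_nat p, 1 :]))" (is "_ = ?R")
proof (rule poly_eqI_of_nat)
  fix x :: nat
  show "poly (moser_poly s 5) (of_nat x) = poly ?R (of_nat x)"
    unfolding poly_moser5_closed_form using poly_moser_poly_5_of_nat[OF assms] .
qed

end
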